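(* Let $\theta_1<\theta_2$, $f\in C^2([\theta_1,\theta_2])$, $\gamma>1$, and let $I\subseteq[\theta_1,\theta_2]$ be a closed interval. Suppose that, for positive constants $A$ and $\alpha$ with $\alpha<2\gamma-3$, one of the following holds: $|f'(s)f''(s)|\ge A(s-\theta_1)^\alpha$ for all $s\in I$; or $|f'(s)f''(s)|\ge A(\theta_2-s)^\alpha$ for all $s\in I$. Then there is a constant $C>0$ depending only on $A,\alpha,\theta_1,\theta_2,\gamma$ such that $\int_I|f(s)|^{-1/\gamma}\,ds\le C$. *)

theory Defs
  imports "HOL-Analysis.Analysis"
begin

end

(* With g = f'^2, the hypothesis says that g' = 2 f' f'' does not vanish inside [a, b], so it has
   constant sign there, and integrating the lower bound A (s - theta1)^alpha (or A (theta2 - s)^alpha)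
   gives |g v - g u| >= c (v - u)^(alpha + 1).  Hence the points where |f'| < eps span an interval of
   length O(eps^(2/(alpha+1))), while by monotonicity of g and the mean value theorem the points where
   |f'| >= eps and |f| <= t span at most 2t/eps.  Balancing the two gives
   |{|f| <= t}| <= K t^(2/(alpha+3)), and summing |f|^(-1/gamma) over the dyadic layers
   2^-(k+1) < |f| <= 2^-k yields a geometric series, which converges because
   1/gamma < 2/(alpha+3), i.e. alpha < 2 gamma - 3. *)

theory Submission
  imports Defs
begin

lemma connected_nonvanishing_sign:
  fixes w :: "'a::topological_space \<Rightarrow> real"
  assumes "connected S" and "continuous_on S w" and "\<And>s. s \<in> S \<Longrightarrow> w s \<noteq> 0"
  obtains \<sigma> :: real where "\<sigma> \<in> {-1, 1}" and "\<And>s. s \<in> S \<Longrightarrow> \<sigma> * w s = \<bar>w s\<bar>"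
proof -
  have "(\<forall>s\<in>S. w s > 0) \<or> (\<forall>s\<in>S. w s < 0)"
  proof (rule ccontr)
    assume "\<not> ?thesis"
    then obtain x y where "x \<in> S" "y \<in> S" "w x \<le> 0" "0 \<le> w y"
      by (meson linorder_not_le)
    moreover have "connected (w ` S)"
      using assms(1,2) by (rule connected_continuous_image[rotated])
    ultimately have "0 \<in> w ` S"
      unfolding connected_iff_interval by blast
    then show False using assms(3) by auto
  qed
  then show thesis
  proof
    assume "\<forall>s\<in>S. w s > 0"
    then show thesis using that[of 1] by (auto simp: abs_of_pos)
  next
    assume "\<forall>s\<in>S. w s < 0"
    then show thesis using that[of "-1"] by (auto simp: abs_of_neg)
  qed
qed

lemma DERIV_ge_imp_diff_ge:
  fixes g \<phi> :: "real \<Rightarrow> real"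
  assumes "u \<le> v" and "continuous_on {u..v} g" and "continuous_on {u..v} \<phi>"
    and "\<And>s. u < s \<Longrightarrow> s < v \<Longrightarrow> (g has_real_derivative g' s) (at s)"
    and "\<And>s. u < s \<Longrightarrow> s < v \<Longrightarrow> (\<phi> has_real_derivative \<phi>' s) (at s)"
    and "\<And>s. u < s \<Longrightarrow> s < v \<Longrightarrow> \<phi>' s \<le> g' s"
  shows "\<phi> v - \<phi> u \<le> g v - g u"
proof -
  have "(g - \<phi>) u \<le> (g - \<phi>) v"
  proof (rule DERIV_nonneg_imp_increasing_open[OF assms(1)])
    fix s assume "u < s" "s < v"
    then show "\<exists>y. ((g - \<phi>) has_real_derivative y) (at s) \<and> 0 \<le> y"
      using assms(4-6) by (auto simp: fun_diff_def intro!: exI DERIV_diff)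
  qed (use assms(2,3) in \<open>auto simp: fun_diff_def intro: continuous_on_diff\<close>)
  then show ?thesis by simp
qed

lemma power_growth_increment:
  fixes g g' :: "real \<Rightarrow> real"
  assumes "p \<le> u" and "u \<le> v" and "v \<le> q" and "A \<ge> 0" and "\<alpha> \<ge> 0"
    and "continuous_on {u..v} g"
    and "\<And>s. u < s \<Longrightarrow> s < v \<Longrightarrow> (g has_real_derivative g' s) (at s)"
    and "(\<forall>s\<in>{u<..<v}. A * (s - p) powr \<alpha> \<le> g' s) \<or> (\<forall>s\<in>{u<..<v}. A * (q - s) powr \<alpha> \<le> g' s)"
  shows "A / (\<alpha> + 1) * (v - u) powr (\<alpha> + 1) \<le> g v - g u"
  using assms(8)
proof
  assume lower: "\<forall>s\<in>{u<..<v}. A * (s - p) powr \<alpha> \<le> g' s"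
  define \<phi> where "\<phi> s = A / (\<alpha> + 1) * (s - u) powr (\<alpha> + 1)" for s
  have "\<phi> v - \<phi> u \<le> g v - g u"
  proof (rule DERIV_ge_imp_diff_ge[OF assms(2,6)])
    show "continuous_on {u..v} \<phi>"
      unfolding \<phi>_def using assms(5) by (intro continuous_intros continuous_on_powr') auto
    fix s assume s: "u < s" "s < v"
    then show "(\<phi> has_real_derivative A * (s - u) powr \<alpha>) (at s)"
      unfolding \<phi>_def using assms(5) by (auto intro!: derivative_eq_intros)
    have "A * (s - u) powr \<alpha> \<le> A * (s - p) powr \<alpha>"
      using s assms(1,4,5) by (intro mult_left_mono powr_mono2) auto
    also have "\<dots> \<le> g' s" using lower s by simp
    finally show "A * (s - u) powr \<alpha> \<le> g' s" .
  qed (use assms(7) in auto)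
  then show ?thesis using assms(5) by (simp add: \<phi>_def)
next
  assume lower: "\<forall>s\<in>{u<..<v}. A * (q - s) powr \<alpha> \<le> g' s"
  define \<phi> where "\<phi> s = - A / (\<alpha> + 1) * (v - s) powr (\<alpha> + 1)" for s
  have "\<phi> v - \<phi> u \<le> g v - g u"
  proof (rule DERIV_ge_imp_diff_ge[OF assms(2,6)])
    show "continuous_on {u..v} \<phi>"
      unfolding \<phi>_def using assms(5) by (intro continuous_intros continuous_on_powr') auto
    fix s assume s: "u < s" "s < v"
    then show "(\<phi> has_real_derivative A * (v - s) powr \<alpha>) (at s)"
      unfolding \<phi>_def using assms(5) by (auto intro!: derivative_eq_intros)
    have "A * (v - s) powr \<alpha> \<le> A * (q - s) powr \<alpha>"
      using s assms(3,4,5) by (intro mult_left_mono powr_mono2) auto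
    also have "\<dots> \<le> g' s" using lower s by simp
    finally show "A * (v - s) powr \<alpha> \<le> g' s" .
  qed (use assms(7) in auto)
  then show ?thesis using assms(5) by (simp add: \<phi>_def)
qed

lemma square_deriv_growth:
  fixes f' f'' :: "real \<Rightarrow> real"
  assumes der: "\<And>s. s \<in> {a..b} \<Longrightarrow> (f' has_real_derivative f'' s) (at s within {a..b})"
    and cont: "continuous_on {a..b} f''" and "A > 0" and "\<alpha> \<ge> 0" and "p \<le> a" and "b \<le> q"
    and lower: "(\<forall>s\<in>{a..b}. A * (s - p) powr \<alpha> \<le> \<bar>f' s * f'' s\<bar>)
             \<or> (\<forall>s\<in>{a..b}. A * (q - s) powr \<alpha> \<le> \<bar>f' s * f'' s\<bar>)"
  obtains \<sigma> :: real where "\<sigma> \<in> {-1, 1}"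
    and "\<And>u v. a \<le> u \<Longrightarrow> u \<le> v \<Longrightarrow> v \<le> b \<Longrightarrow>
           2 * A / (\<alpha> + 1) * (v - u) powr (\<alpha> + 1) \<le> \<sigma> * (f' v ^ 2 - f' u ^ 2)"
proof -
  have cont_f': "continuous_on {a..b} f'"
    unfolding continuous_on_eq_continuous_within using DERIV_continuous[OF der] by blast
  have deriv_sq: "((\<lambda>s. f' s ^ 2) has_real_derivative 2 * (f' s * f'' s)) (at s)"
    if "a < s" "s < b" for s
  proof -
    have "(f' has_real_derivative f'' s) (at s within {a..b})"
      using der that by auto
    then have "(f' has_real_derivative f'' s) (at s)"
      using that by (simp add: at_within_Icc_at)
    then show ?thesis by (auto intro!: derivative_eq_intros)
  qed
  have nonzero: "f' s * f'' s \<noteq> 0" if "s \<in> {a<..<b}" for s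
  proof -
    have "0 < A * (s - p) powr \<alpha>" "0 < A * (q - s) powr \<alpha>"
      using that \<open>p \<le> a\<close> \<open>b \<le> q\<close> \<open>A > 0\<close> by auto
    moreover have "s \<in> {a..b}" using that by simp
    ultimately have "0 < \<bar>f' s * f'' s\<bar>" using lower by (meson order_less_le_trans)
    then show ?thesis by simp
  qed
  have cont_product: "continuous_on {a<..<b} (\<lambda>s. f' s * f'' s)"
    by (intro continuous_intros continuous_on_subset[OF cont_f'] continuous_on_subset[OF cont]) auto
  then obtain \<sigma> where \<sigma>: "\<sigma> \<in> {-1, 1}"
    and \<sigma>_abs: "\<And>s. s \<in> {a<..<b} \<Longrightarrow> \<sigma> * (f' s * f'' s) = \<bar>f' s * f'' s\<bar>"
    using connected_nonvanishing_sign[OF connected_Ioo cont_product nonzero] by blast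
  show thesis
  proof (rule that[OF \<sigma>])
    fix u v assume uv: "a \<le> u" "u \<le> v" "v \<le> b"
    have "A / (\<alpha> + 1) * (v - u) powr (\<alpha> + 1) \<le> \<sigma> * f' v ^ 2 / 2 - \<sigma> * f' u ^ 2 / 2"
    proof (rule power_growth_increment[OF order_trans[OF \<open>p \<le> a\<close> uv(1)] uv(2)
                order_trans[OF uv(3) \<open>b \<le> q\<close>], where g' = "\<lambda>s. \<bar>f' s * f'' s\<bar>"])
      show "A \<ge> 0" using \<open>A > 0\<close> by simp
      show "continuous_on {u..v} (\<lambda>s. \<sigma> * f' s ^ 2 / 2)"
        using uv by (intro continuous_intros continuous_on_subset[OF cont_f']) auto
      show "((\<lambda>s. \<sigma> * f' s ^ 2 / 2) has_real_derivative \<bar>f' s * f'' s\<bar>) (at s)"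
        if "u < s" "s < v" for s
      proof -
        have "((\<lambda>s. \<sigma> * f' s ^ 2 / 2) has_real_derivative \<sigma> * (2 * (f' s * f'' s)) / 2) (at s)"
          using deriv_sq that uv by (intro DERIV_cmult DERIV_cdivide) auto
        moreover have "\<sigma> * (2 * (f' s * f'' s)) / 2 = \<bar>f' s * f'' s\<bar>"
          using \<sigma>_abs that uv by simp
        ultimately show ?thesis by (simp only:)
      qed
      have "{u<..<v} \<subseteq> {a..b}" using uv by auto
      then show "(\<forall>s\<in>{u<..<v}. A * (s - p) powr \<alpha> \<le> \<bar>f' s * f'' s\<bar>)
          \<or> (\<forall>s\<in>{u<..<v}. A * (q - s) powr \<alpha> \<le> \<bar>f' s * f'' s\<bar>)"
        using lower by blast
    qed fact
    then show "2 * A / (\<alpha> + 1) * (v - u) powr (\<alpha> + 1) \<le> \<sigma> * (f' v ^ 2 - f' u ^ 2)"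
      by (simp add: field_simps)
  qed
qed

lemma spread_le_imp_cover:
  fixes S :: "real set"
  assumes "d \<ge> 0" and "\<And>x y. x \<in> S \<Longrightarrow> y \<in> S \<Longrightarrow> x \<le> y \<Longrightarrow> y - x \<le> d"
  shows "\<exists>T\<in>sets lborel. S \<subseteq> T \<and> emeasure lborel T \<le> ennreal (2 * d)"
proof (cases "S = {}")
  case True
  then show ?thesis by (intro bexI[of _ "{}"]) auto
next
  case False
  then obtain x where "x \<in> S" by auto
  have "S \<subseteq> {x - d..x + d}"
  proof
    fix y assume "y \<in> S"
    then show "y \<in> {x - d..x + d}"
      using assms(2)[of x y] assms(2)[of y x] \<open>x \<in> S\<close> \<open>d \<ge> 0\<close> by (cases "x \<le> y") auto
  qed
  then show ?thesis using \<open>d \<ge> 0\<close> by (intro bexI[of _ "{x - d..x + d}"]) auto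
qed

lemma DERIV_abs_ge_imp_abs_diff_ge:
  fixes f f' :: "real \<Rightarrow> real"
  assumes "x \<le> y"
    and "\<And>z. z \<in> {x..y} \<Longrightarrow> (f has_real_derivative f' z) (at z within {x..y})"
    and "\<And>z. z \<in> {x..y} \<Longrightarrow> \<epsilon> \<le> \<bar>f' z\<bar>"
  shows "\<epsilon> * (y - x) \<le> \<bar>f y - f x\<bar>"
proof (cases "x = y")
  case False
  then have "x < y" using \<open>x \<le> y\<close> by simp
  then obtain z where z: "z \<in> {x<..<y}" "f y - f x = f' z * (y - x)"
    using mvt_simple[of x y f "\<lambda>z h. f' z * h"] assms(2)
    by (auto simp: has_field_derivative_def)
  then have "\<epsilon> * (y - x) \<le> \<bar>f' z\<bar> * (y - x)"
    using assms(3) \<open>x < y\<close> by (intro mult_right_mono) auto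
  also have "\<dots> = \<bar>f y - f x\<bar>" using z \<open>x < y\<close> by (simp add: abs_mult)
  finally show ?thesis .
qed simp

lemma small_derivative_spread:
  fixes f' :: "real \<Rightarrow> real"
  assumes "\<sigma> \<in> {-1, 1}" and "c > 0" and "\<alpha> > -1" and "x \<le> y"
    and growth: "c * (y - x) powr (\<alpha> + 1) \<le> \<sigma> * (f' y ^ 2 - f' x ^ 2)"
    and "\<bar>f' x\<bar> < \<epsilon>" and "\<bar>f' y\<bar> < \<epsilon>"
  shows "y - x \<le> (\<epsilon>\<^sup>2 / c) powr (1 / (\<alpha> + 1))"
proof -
  have "f' x ^ 2 < \<epsilon>\<^sup>2" "f' y ^ 2 < \<epsilon>\<^sup>2"
    using assms(6,7) abs_le_square_iff[of \<epsilon> "f' x"] abs_le_square_iff[of \<epsilon> "f' y"] by auto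
  have "c * (y - x) powr (\<alpha> + 1) \<le> \<bar>f' y ^ 2 - f' x ^ 2\<bar>"
    using growth \<open>\<sigma> \<in> {-1, 1}\<close> by auto
  also have "\<dots> < \<epsilon>\<^sup>2"
    unfolding abs_less_iff
    using \<open>f' x ^ 2 < \<epsilon>\<^sup>2\<close> \<open>f' y ^ 2 < \<epsilon>\<^sup>2\<close> zero_le_power2[of "f' x"] zero_le_power2[of "f' y"]
    by linarith
  finally have "((y - x) powr (\<alpha> + 1)) powr (1 / (\<alpha> + 1)) \<le> (\<epsilon>\<^sup>2 / c) powr (1 / (\<alpha> + 1))"
    using \<open>c > 0\<close> \<open>\<alpha> > -1\<close> by (intro powr_mono2) (auto simp: field_simps)
  then show ?thesis using \<open>\<alpha> > -1\<close> \<open>x \<le> y\<close> by (simp add: powr_powr)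
qed

lemma mono_on_signed_square_abs_min_le:
  fixes g :: "real \<Rightarrow> real"
  assumes "mono_on {a..b} (\<lambda>s. \<sigma> * g s ^ 2)" and "\<sigma> \<in> {-1, 1}"
    and "a \<le> x" and "x \<le> z" and "z \<le> y" and "y \<le> b"
  shows "min \<bar>g x\<bar> \<bar>g y\<bar> \<le> \<bar>g z\<bar>"
proof -
  have "\<sigma> * g x ^ 2 \<le> \<sigma> * g z ^ 2" "\<sigma> * g z ^ 2 \<le> \<sigma> * g y ^ 2"
    using assms by (auto intro: mono_onD)
  then have "g x ^ 2 \<le> g z ^ 2 \<or> g y ^ 2 \<le> g z ^ 2"
    using \<open>\<sigma> \<in> {-1, 1}\<close> by auto
  then show ?thesis by (auto simp flip: abs_le_square_iff)
qed

lemma sublevel_set_cover: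
  fixes f f' :: "real \<Rightarrow> real"
  assumes der: "\<And>s. s \<in> {a..b} \<Longrightarrow> (f has_real_derivative f' s) (at s within {a..b})"
    and "\<sigma> \<in> {-1, 1}"
    and growth: "\<And>u v. a \<le> u \<Longrightarrow> u \<le> v \<Longrightarrow> v \<le> b \<Longrightarrow>
                   c * (v - u) powr (\<alpha> + 1) \<le> \<sigma> * (f' v ^ 2 - f' u ^ 2)"
    and "c > 0" and "\<alpha> > -1" and "t > 0"
  shows "\<exists>T\<in>sets lborel. {s\<in>{a..b}. \<bar>f s\<bar> \<le> t} \<subseteq> T \<and>
           emeasure lborel T \<le> ennreal ((2 * c powr (-1 / (\<alpha> + 1)) + 4) * t powr (2 / (\<alpha> + 3)))"
proof -
  \<comment> \<open>This \<open>\<epsilon>\<close> makes both spreads below multiples of \<open>t powr (2 / (\<alpha> + 3))\<close>.\<close>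
  define \<epsilon> where "\<epsilon> = t powr ((\<alpha> + 1) / (\<alpha> + 3))"
  define L where "L = (\<epsilon>\<^sup>2 / c) powr (1 / (\<alpha> + 1))"
  have "\<epsilon> > 0" using \<open>t > 0\<close> by (simp add: \<epsilon>_def)
  have "L \<ge> 0" by (simp add: L_def)
  have L_eq: "L = c powr (-1 / (\<alpha> + 1)) * t powr (2 / (\<alpha> + 3))"
  proof -
    have "\<epsilon>\<^sup>2 = t powr ((\<alpha> + 1) / (\<alpha> + 3) * 2)"
      using \<open>t > 0\<close> by (simp add: \<epsilon>_def powr_powr flip: powr_realpow)
    also have "(\<alpha> + 1) / (\<alpha> + 3) * 2 = 2 / (\<alpha> + 3) * (\<alpha> + 1)"
      by simp
    finally have "(\<epsilon>\<^sup>2) powr (1 / (\<alpha> + 1)) = t powr (2 / (\<alpha> + 3) * (\<alpha> + 1) * (1 / (\<alpha> + 1)))"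
      by (simp only: powr_powr)
    also have "2 / (\<alpha> + 3) * (\<alpha> + 1) * (1 / (\<alpha> + 1)) = 2 / (\<alpha> + 3)"
      using \<open>\<alpha> > -1\<close> by (simp add: divide_simps)
    finally have "(\<epsilon>\<^sup>2) powr (1 / (\<alpha> + 1)) = t powr (2 / (\<alpha> + 3))" .
    then show ?thesis
      using \<open>c > 0\<close> by (simp add: L_def powr_divide powr_minus_divide divide_simps)
  qed
  have t_div_\<epsilon>: "t / \<epsilon> = t powr (2 / (\<alpha> + 3))"
  proof -
    have "t / \<epsilon> = t powr (1 - (\<alpha> + 1) / (\<alpha> + 3))"
      using \<open>t > 0\<close> by (simp add: \<epsilon>_def powr_diff)
    also have "1 - (\<alpha> + 1) / (\<alpha> + 3) = 2 / (\<alpha> + 3)"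
      using \<open>\<alpha> > -1\<close> by (simp add: field_simps)
    finally show ?thesis .
  qed
  have mono: "mono_on {a..b} (\<lambda>s. \<sigma> * f' s ^ 2)"
  proof (rule mono_onI)
    fix u v assume "u \<in> {a..b}" "v \<in> {a..b}" "u \<le> v"
    have "0 \<le> c * (v - u) powr (\<alpha> + 1)" using \<open>c > 0\<close> by simp
    also have "\<dots> \<le> \<sigma> * (f' v ^ 2 - f' u ^ 2)"
      using growth[of u v] \<open>u \<in> {a..b}\<close> \<open>v \<in> {a..b}\<close> \<open>u \<le> v\<close> by simp
    finally have "0 \<le> \<sigma> * (f' v ^ 2 - f' u ^ 2)" .
    then show "\<sigma> * f' u ^ 2 \<le> \<sigma> * f' v ^ 2" by (simp add: right_diff_distrib)
  qed
  define P where "P = {s\<in>{a..b}. \<bar>f' s\<bar> < \<epsilon>}"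
  define Q where "Q = {s\<in>{a..b}. \<bar>f s\<bar> \<le> t \<and> \<epsilon> \<le> \<bar>f' s\<bar>}"
  have P_spread: "y - x \<le> L" if "x \<in> P" "y \<in> P" "x \<le> y" for x y
    unfolding L_def
    by (rule small_derivative_spread[OF \<open>\<sigma> \<in> {-1, 1}\<close> \<open>c > 0\<close> \<open>\<alpha> > -1\<close> \<open>x \<le> y\<close> growth])
       (use that in \<open>auto simp: P_def\<close>)
  obtain T1 where T1: "T1 \<in> sets lborel" "P \<subseteq> T1" "emeasure lborel T1 \<le> ennreal (2 * L)"
    using \<open>L \<ge> 0\<close> P_spread by (metis spread_le_imp_cover)
  have Q_spread: "y - x \<le> 2 * (t / \<epsilon>)" if "x \<in> Q" "y \<in> Q" "x \<le> y" for x y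
  proof -
    have xy: "a \<le> x" "y \<le> b" using that by (auto simp: Q_def)
    have "\<epsilon> * (y - x) \<le> \<bar>f y - f x\<bar>"
    proof (rule DERIV_abs_ge_imp_abs_diff_ge[OF \<open>x \<le> y\<close>])
      fix z assume z: "z \<in> {x..y}"
      then show "(f has_real_derivative f' z) (at z within {x..y})"
        using der[of z] xy by (auto intro: DERIV_subset)
      have "\<epsilon> \<le> min \<bar>f' x\<bar> \<bar>f' y\<bar>" using that by (simp add: Q_def)
      also have "\<dots> \<le> \<bar>f' z\<bar>"
        using mono_on_signed_square_abs_min_le[OF mono \<open>\<sigma> \<in> {-1, 1}\<close>] xy z by simp
      finally show "\<epsilon> \<le> \<bar>f' z\<bar>" .
    qed
    also have "\<dots> \<le> 2 * t" using that by (auto simp: Q_def)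
    finally show ?thesis using \<open>\<epsilon> > 0\<close> by (simp add: field_simps)
  qed
  have "2 * (t / \<epsilon>) \<ge> 0" using \<open>t > 0\<close> \<open>\<epsilon> > 0\<close> by simp
  then obtain T2 where T2: "T2 \<in> sets lborel" "Q \<subseteq> T2" "emeasure lborel T2 \<le> ennreal (2 * (2 * (t / \<epsilon>)))"
    using Q_spread by (metis spread_le_imp_cover)
  have "{s\<in>{a..b}. \<bar>f s\<bar> \<le> t} \<subseteq> P \<union> Q" by (auto simp: P_def Q_def)
  then have "{s\<in>{a..b}. \<bar>f s\<bar> \<le> t} \<subseteq> T1 \<union> T2" using T1(2) T2(2) by blast
  moreover have "emeasure lborel (T1 \<union> T2) \<le> ennreal (2 * L) + ennreal (2 * (2 * (t / \<epsilon>)))"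
    using emeasure_subadditive[OF T1(1) T2(1)] T1(3) T2(3) by (meson add_mono order.trans)
  moreover have "ennreal (2 * L) + ennreal (2 * (2 * (t / \<epsilon>)))
      = ennreal ((2 * c powr (-1 / (\<alpha> + 1)) + 4) * t powr (2 / (\<alpha> + 3)))"
    using \<open>L \<ge> 0\<close> \<open>t > 0\<close> \<open>\<epsilon> > 0\<close>
    by (subst ennreal_plus[symmetric]) (auto simp: L_eq t_div_\<epsilon> algebra_simps)
  ultimately show ?thesis using T1(1) T2(1) by (intro bexI[of _ "T1 \<union> T2"]) auto
qed

lemma dyadic_level:
  fixes x p :: real
  assumes "0 < x" "x < 1" "p > 0"
  obtains k :: nat where "x \<le> 2 powr - real k" "x powr - p \<le> 2 powr ((real k + 1) * p)"
proof
  define k where "k = nat \<lfloor>log 2 (1 / x)\<rfloor>"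
  have "log 2 (1 / x) > 0" using assms by simp
  then have k: "real k \<le> log 2 (1 / x)" "log 2 (1 / x) < real k + 1"
    unfolding k_def by linarith+
  have "2 powr real k \<le> 1 / x" using k(1) assms by (simp add: le_log_iff)
  then show "x \<le> 2 powr - real k" using assms by (simp add: powr_minus field_simps)
  have "1 / x < 2 powr (real k + 1)" using k(2) assms by (simp add: log_less_iff)
  then have "(1 / x) powr p \<le> (2 powr (real k + 1)) powr p"
    using assms by (intro powr_mono2) auto
  then show "x powr - p \<le> 2 powr ((real k + 1) * p)"
    using assms by (simp add: powr_powr powr_minus_divide powr_divide)
qed

lemma ennreal_powr_neg_le_dyadic_series:
  fixes y p :: real and T :: "nat \<Rightarrow> 'a set"
  assumes "0 < p" and "0 \<le> y" and cover: "\<And>k. y \<le> 2 powr - real k \<Longrightarrow> x \<in> T k"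
  shows "ennreal (y powr - p) \<le> 1 + (\<Sum>k. ennreal (2 powr ((real k + 1) * p)) * indicator (T k) x)"
proof (cases "0 < y \<and> y < 1")
  case False
  \<comment> \<open>includes \<open>y = 0\<close>, where \<open>0 powr - p = 0\<close>\<close>
  then have "y powr - p \<le> 1"
    using assms(1,2) by (auto simp: powr_minus_divide ge_one_powr_ge_zero)
  then show ?thesis by (simp add: add_increasing2)
next
  case True
  then obtain k where k: "y \<le> 2 powr - real k" "y powr - p \<le> 2 powr ((real k + 1) * p)"
    using dyadic_level \<open>0 < p\<close> by blast
  define F where "F i = ennreal (2 powr ((real i + 1) * p)) * indicator (T i) x" for i
  have "ennreal (y powr - p) \<le> F k"
    using k cover[OF k(1)] by (simp add: F_def ennreal_leI)
  also have "\<dots> \<le> (\<Sum>i. F i)"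
  proof -
    have "(\<Sum>i\<in>{k}. F i) \<le> (\<Sum>i. F i)" by (intro sum_le_suminf) auto
    then show ?thesis by simp
  qed
  finally show ?thesis by (simp add: F_def add_increasing)
qed

lemma nn_integral_powr_neg_le_sublevel:
  fixes h :: "real \<Rightarrow> real"
  assumes "S \<in> sets lborel" and "0 < p" and "p < \<beta>" and "K \<ge> 0"
    and sublevel: "\<And>t. t > 0 \<Longrightarrow>
      \<exists>T\<in>sets lborel. {s\<in>S. \<bar>h s\<bar> \<le> t} \<subseteq> T \<and> emeasure lborel T \<le> ennreal (K * t powr \<beta>)"
  shows "(\<integral>\<^sup>+ s. ennreal (\<bar>h s\<bar> powr - p) * indicator S s \<partial>lborel)
           \<le> emeasure lborel S + ennreal (K * 2 powr p / (1 - 2 powr (p - \<beta>)))"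
proof -
  define r where "r = 2 powr (p - \<beta>)"
  have "0 < r" "r < 1" using \<open>p < \<beta>\<close> by (auto simp: r_def powr_less_one)
  have "\<exists>T\<in>sets lborel. {s\<in>S. \<bar>h s\<bar> \<le> 2 powr - real k} \<subseteq> T
          \<and> emeasure lborel T \<le> ennreal (K * (2 powr - real k) powr \<beta>)" for k :: nat
    by (rule sublevel) simp
  then obtain T where "\<forall>k. T k \<in> sets lborel \<and> {s\<in>S. \<bar>h s\<bar> \<le> 2 powr - real k} \<subseteq> T k
          \<and> emeasure lborel (T k) \<le> ennreal (K * (2 powr - real k) powr \<beta>)"
    using choice[of "\<lambda>k T. T \<in> sets lborel \<and> {s\<in>S. \<bar>h s\<bar> \<le> 2 powr - real k} \<subseteq> T
          \<and> emeasure lborel T \<le> ennreal (K * (2 powr - real k) powr \<beta>)"] by blast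
  then have T: "\<And>k. T k \<in> sets lborel" "\<And>k. {s\<in>S. \<bar>h s\<bar> \<le> 2 powr - real k} \<subseteq> T k"
    "\<And>k. emeasure lborel (T k) \<le> ennreal (K * (2 powr - real k) powr \<beta>)"
    by auto
  define w where "w k = ennreal (2 powr ((real k + 1) * p))" for k
  have pointwise: "ennreal (\<bar>h s\<bar> powr - p) * indicator S s \<le> indicator S s + (\<Sum>k. w k * indicator (T k) s)" for s
  proof (cases "s \<in> S")
    case True
    then have "\<bar>h s\<bar> \<le> 2 powr - real k \<Longrightarrow> s \<in> T k" for k using T(2) by blast
    then have "ennreal (\<bar>h s\<bar> powr - p) \<le> 1 + (\<Sum>k. w k * indicator (T k) s)"
      unfolding w_def by (rule ennreal_powr_neg_le_dyadic_series[OF \<open>p > 0\<close> abs_ge_zero])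
    then show ?thesis using True by simp
  qed simp
  have "(\<integral>\<^sup>+ s. ennreal (\<bar>h s\<bar> powr - p) * indicator S s \<partial>lborel)
      \<le> (\<integral>\<^sup>+ s. indicator S s + (\<Sum>k. w k * indicator (T k) s) \<partial>lborel)"
    by (intro nn_integral_mono pointwise)
  also have "\<dots> = emeasure lborel S + (\<Sum>k. w k * emeasure lborel (T k))"
    using T(1) \<open>S \<in> sets lborel\<close> by (simp add: nn_integral_add nn_integral_suminf nn_integral_cmult_indicator)
  also have "\<dots> \<le> emeasure lborel S + (\<Sum>k. ennreal (K * 2 powr p * r ^ k))"
  proof (intro add_left_mono suminf_le summableI)
    fix k
    have "w k * emeasure lborel (T k) \<le> w k * ennreal (K * (2 powr - real k) powr \<beta>)"
      by (intro mult_left_mono T(3)) auto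
    also have "\<dots> = ennreal (K * 2 powr p * r ^ k)"
      using \<open>K \<ge> 0\<close>
      by (simp add: w_def r_def ennreal_mult'[symmetric] powr_powr field_simps
          flip: powr_realpow powr_add)
    finally show "w k * emeasure lborel (T k) \<le> ennreal (K * 2 powr p * r ^ k)" .
  qed
  also have "(\<Sum>k. ennreal (K * 2 powr p * r ^ k)) = ennreal (K * 2 powr p / (1 - r))"
  proof -
    have "(\<lambda>k. K * 2 powr p * r ^ k) sums (K * 2 powr p / (1 - r))"
      using geometric_sums[of r] \<open>0 < r\<close> \<open>r < 1\<close> sums_mult[of _ _ "K * 2 powr p"]
      by (simp add: divide_inverse)
    then show ?thesis
      using \<open>K \<ge> 0\<close> \<open>0 < r\<close> \<open>r < 1\<close>
      by (subst suminf_ennreal2) (auto simp: sums_summable sums_unique[symmetric])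
  qed
  finally show ?thesis by (simp add: r_def)
qed

lemma nn_integral_powr_neg_le_of_deriv_product:
  fixes f f' f'' :: "real \<Rightarrow> real"
  assumes der: "\<And>s. s \<in> {a..b} \<Longrightarrow> (f has_real_derivative f' s) (at s within {a..b})"
    and der': "\<And>s. s \<in> {a..b} \<Longrightarrow> (f' has_real_derivative f'' s) (at s within {a..b})"
    and "continuous_on {a..b} f''" and "A > 0" and "\<alpha> \<ge> 0" and "0 < p" and "p < 2 / (\<alpha> + 3)"
    and "q\<^sub>1 \<le> a" and "a \<le> b" and "b \<le> q\<^sub>2"
    and "(\<forall>s\<in>{a..b}. A * (s - q\<^sub>1) powr \<alpha> \<le> \<bar>f' s * f'' s\<bar>)
       \<or> (\<forall>s\<in>{a..b}. A * (q\<^sub>2 - s) powr \<alpha> \<le> \<bar>f' s * f'' s\<bar>)"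
  shows "(\<integral>\<^sup>+ s. ennreal (\<bar>f s\<bar> powr - p) * indicator {a..b} s \<partial>lborel)
           \<le> ennreal (b - a + (2 * (2 * A / (\<alpha> + 1)) powr (-1 / (\<alpha> + 1)) + 4) * 2 powr p
                               / (1 - 2 powr (p - 2 / (\<alpha> + 3))))"
proof -
  define K where "K = 2 * (2 * A / (\<alpha> + 1)) powr (-1 / (\<alpha> + 1)) + 4"
  have "K \<ge> 0" by (simp add: K_def add_nonneg_nonneg)
  obtain \<sigma> where "\<sigma> \<in> {-1, 1}" and growth: "\<And>u v. a \<le> u \<Longrightarrow> u \<le> v \<Longrightarrow> v \<le> b \<Longrightarrow>
      2 * A / (\<alpha> + 1) * (v - u) powr (\<alpha> + 1) \<le> \<sigma> * (f' v ^ 2 - f' u ^ 2)"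
    using square_deriv_growth[OF der' assms(3-5,8,10,11)] by blast
  have "(\<integral>\<^sup>+ s. ennreal (\<bar>f s\<bar> powr - p) * indicator {a..b} s \<partial>lborel)
      \<le> emeasure lborel {a..b} + ennreal (K * 2 powr p / (1 - 2 powr (p - 2 / (\<alpha> + 3))))"
  proof (rule nn_integral_powr_neg_le_sublevel)
    show "\<exists>T\<in>sets lborel. {s\<in>{a..b}. \<bar>f s\<bar> \<le> t} \<subseteq> T
            \<and> emeasure lborel T \<le> ennreal (K * t powr (2 / (\<alpha> + 3)))"
      if "t > 0" for t
      unfolding K_def
      by (rule sublevel_set_cover[OF der \<open>\<sigma> \<in> {-1, 1}\<close> growth]) (use assms(4,5) that in auto)
  qed (use assms(6,7) \<open>K \<ge> 0\<close> in auto)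
  also have "\<dots> \<le> ennreal (b - a) + ennreal (K * 2 powr p / (1 - 2 powr (p - 2 / (\<alpha> + 3))))"
    using \<open>a \<le> b\<close> by simp
  also have "\<dots> = ennreal (b - a + K * 2 powr p / (1 - 2 powr (p - 2 / (\<alpha> + 3))))"
  proof -
    have "2 powr (p - 2 / (\<alpha> + 3)) < 1" using assms(7) by (simp add: powr_less_one)
    then show ?thesis using \<open>a \<le> b\<close> \<open>K \<ge> 0\<close> by (subst ennreal_plus) auto
  qed
  finally show ?thesis by (simp add: K_def)
qed

theorem lemma3p5:
  fixes \<theta>1 \<theta>2 \<gamma> A \<alpha> :: real
  assumes "\<theta>1 < \<theta>2" and "\<gamma> > 1" and "A > 0" and "\<alpha> > 0" and "\<alpha> < 2 * \<gamma> - 3"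
  shows "\<exists>C>0. \<forall>(f::real \<Rightarrow> real) f' f'' a b.
     (\<forall>s\<in>{\<theta>1..\<theta>2}. (f has_real_derivative f' s) (at s within {\<theta>1..\<theta>2})
                    \<and> (f' has_real_derivative f'' s) (at s within {\<theta>1..\<theta>2}))
     \<and> continuous_on {\<theta>1..\<theta>2} f''
     \<and> \<theta>1 \<le> a \<and> a \<le> b \<and> b \<le> \<theta>2
     \<and> ((\<forall>s\<in>{a..b}. \<bar>f' s * f'' s\<bar> \<ge> A * (s - \<theta>1) powr \<alpha>)
        \<or> (\<forall>s\<in>{a..b}. \<bar>f' s * f'' s\<bar> \<ge> A * (\<theta>2 - s) powr \<alpha>))
     \<longrightarrow> (\<integral>\<^sup>+ s. ennreal (\<bar>f s\<bar> powr (-1 / \<gamma>)) * indicator {a..b} s \<partial>lborel) \<le> ennreal C"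
proof -
  define K where "K = (2 * (2 * A / (\<alpha> + 1)) powr (-1 / (\<alpha> + 1)) + 4) * 2 powr (1 / \<gamma>)
                        / (1 - 2 powr (1 / \<gamma> - 2 / (\<alpha> + 3)))"
  have p_small: "1 / \<gamma> < 2 / (\<alpha> + 3)" using assms by (simp add: field_simps)
  then have "2 powr (1 / \<gamma> - 2 / (\<alpha> + 3)) < 1" by (simp add: powr_less_one)
  then have "K \<ge> 0" unfolding K_def by (intro divide_nonneg_pos mult_nonneg_nonneg add_nonneg_nonneg) auto
  show ?thesis
  proof (intro exI[of _ "\<theta>2 - \<theta>1 + K"] conjI allI impI)
    show "\<theta>2 - \<theta>1 + K > 0" using \<open>\<theta>1 < \<theta>2\<close> \<open>K \<ge> 0\<close> by simp
    fix f f' f'' :: "real \<Rightarrow> real" and a b :: real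
    assume hyps: "(\<forall>s\<in>{\<theta>1..\<theta>2}. (f has_real_derivative f' s) (at s within {\<theta>1..\<theta>2})
                    \<and> (f' has_real_derivative f'' s) (at s within {\<theta>1..\<theta>2}))
     \<and> continuous_on {\<theta>1..\<theta>2} f''
     \<and> \<theta>1 \<le> a \<and> a \<le> b \<and> b \<le> \<theta>2
     \<and> ((\<forall>s\<in>{a..b}. \<bar>f' s * f'' s\<bar> \<ge> A * (s - \<theta>1) powr \<alpha>)
        \<or> (\<forall>s\<in>{a..b}. \<bar>f' s * f'' s\<bar> \<ge> A * (\<theta>2 - s) powr \<alpha>))"
    then have sub: "{a..b} \<subseteq> {\<theta>1..\<theta>2}" by auto
    have "(\<integral>\<^sup>+ s. ennreal (\<bar>f s\<bar> powr - (1 / \<gamma>)) * indicator {a..b} s \<partial>lborel)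
        \<le> ennreal (b - a + K)"
      unfolding K_def
    proof (rule nn_integral_powr_neg_le_of_deriv_product)
      fix s assume "s \<in> {a..b}"
      then have "s \<in> {\<theta>1..\<theta>2}" using sub by blast
      then show "(f has_real_derivative f' s) (at s within {a..b})"
        and "(f' has_real_derivative f'' s) (at s within {a..b})"
        using hyps DERIV_subset[OF _ sub] by blast+
    next
      show "continuous_on {a..b} f''" using hyps sub by (auto intro: continuous_on_subset)
    qed (use assms p_small hyps in auto)
    also have "\<dots> \<le> ennreal (\<theta>2 - \<theta>1 + K)" using hyps by (intro ennreal_leI) auto
    finally show "(\<integral>\<^sup>+ s. ennreal (\<bar>f s\<bar> powr (-1 / \<gamma>)) * indicator {a..b} s \<partial>lborel)
        \<le> ennreal (\<theta>2 - \<theta>1 + K)"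
      by simp
  qed
qed

end
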